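(* For every integer $n\ge0$, the number $2^n$ is a fixed point of every homeomorphism $h:\mathbb{N}\to\mathbb{N}$ of the Kirch space $(\mathbb{N},\tau_K)$.
   Context: $\mathbb{N}=\{1,2,\dots\}$, $\mathbb{N}_0=\{0\}\cup\mathbb{N}$. The Kirch topology $\tau_K$ on $\mathbb{N}$ is the topology generated by the base of all $a+b\mathbb{N}_0=\{a+bn:n\in\mathbb{N}_0\}$ with $a,b\in\mathbb{N}$ coprime and $b$ square-free. *)

theory Defs
  imports "HOL-Analysis.Analysis" "HOL-Computational_Algebra.Squarefree"
begin

definition arith_prog :: "nat \<Rightarrow> nat \<Rightarrow> nat set" where
  "arith_prog a b = {a + b * n | n. True}"

definition kirch_base :: "nat set set" where
  "kirch_base = {arith_prog a b | a b. 0 < a \<and> 0 < b \<and> coprime a b \<and> squarefree b}"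

text \<open>The Kirch topology on N = {1,2,...}: topology generated by kirch_base;
  its carrier is the union of the base, i.e. {1..}.\<close>
definition kirch_topology :: "nat topology" where
  "kirch_topology = topology_generated_by kirch_base"

end

theory Submission
  imports Defs
begin

(* Call x and y closure-adjacent in a space X if every nonempty open W admits open
   neighbourhoods U of x and V of y with cl U \<inter> cl V \<subseteq> cl W; homeomorphisms preserve this.
   In the Kirch topology the closure of a basic set a + bN is described prime by prime: w lies
   in it iff every prime q dividing b divides w or satisfies w = a (mod q). From this one gets
   that x and y are closure-adjacent iff no odd prime divides x, y or x - y, i.e. iff
   {x, y} = {2^k, 2^(k+1)}. So a homeomorphism is an automorphism of the path
   1 - 2 - 4 - 8 - ..., whose only end point is 1; hence it fixes 1 and, inductively,
   every power of two. *)

lemma coprime_if_no_common_prime_divisor: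
  fixes a b :: nat
  assumes "\<And>p. prime p \<Longrightarrow> p dvd a \<Longrightarrow> \<not> p dvd b"
  shows "coprime a b"
proof (rule ccontr)
  assume "\<not> coprime a b"
  then obtain p where "prime p" "p dvd gcd a b"
    using prime_factor_nat by (metis coprime_iff_gcd_eq_1)
  then show False using assms by auto
qed

lemma prime_not_dvd_if_coprime:
  fixes a b p :: nat
  assumes "coprime a b" "prime p" "p dvd b"
  shows "\<not> p dvd a"
  using assms by (meson coprime_common_divisor not_prime_unit)

lemma odd_prime_not_dvd_power_of_two:
  fixes r :: nat
  assumes "prime r" "odd r"
  shows "\<not> r dvd 2 ^ k"
  using assms prime_dvd_power primes_dvd_imp_eq two_is_prime_nat by blast

lemma prime_free_part:
  fixes n p :: nat
  assumes "n \<noteq> 0" "prime p"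
  obtains k m where "n = p ^ k * m" "\<not> p dvd m"
    "\<And>q. prime q \<Longrightarrow> q dvd n \<Longrightarrow> q \<noteq> p \<Longrightarrow> q dvd m"
proof -
  obtain m where m: "n = p ^ multiplicity p n * m" "\<not> p dvd m"
    using multiplicity_decompose' assms by (metis not_prime_unit)
  have "q dvd m" if "prime q" "q dvd n" "q \<noteq> p" for q
  proof -
    have "\<not> q dvd p ^ multiplicity p n"
      using that assms(2) prime_dvd_power primes_dvd_imp_eq by blast
    then show ?thesis using that m(1) prime_dvd_mult_iff by metis
  qed
  then show ?thesis using that m by blast
qed

lemma power_of_two_if_no_odd_prime_divisor:
  fixes n :: nat
  assumes "0 < n" "\<And>p. prime p \<Longrightarrow> odd p \<Longrightarrow> \<not> p dvd n"
  shows "\<exists>k. n = 2 ^ k"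
proof -
  obtain k m where km: "n = 2 ^ k * m" "odd m"
      "\<And>q. prime q \<Longrightarrow> q dvd n \<Longrightarrow> q \<noteq> 2 \<Longrightarrow> q dvd m"
    using prime_free_part[OF _ two_is_prime_nat] assms(1) by blast
  have "m = 1"
  proof (rule ccontr)
    assume "m \<noteq> 1"
    then obtain q where q: "prime q" "q dvd m" using prime_factor_nat by blast
    then have "odd q" using km(2) dvd_trans by blast
    then show False using assms(2) q km(1) by (metis dvd_mult)
  qed
  then show ?thesis using km(1) by auto
qed

lemma squarefree_dvd_if_prime_divisors_dvd:
  fixes g m :: nat
  assumes "squarefree g" "\<And>p. prime p \<Longrightarrow> p dvd g \<Longrightarrow> p dvd m"
  shows "g dvd m"
proof (cases "m = 0")
  case False
  have g0: "g \<noteq> 0" using assms(1) by (metis not_squarefree_0)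
  show ?thesis
  proof (rule multiplicity_le_imp_dvd[OF g0])
    fix p :: nat assume p: "prime p"
    show "multiplicity p g \<le> multiplicity p m"
    proof (cases "p dvd g")
      case True
      then have "1 \<le> multiplicity p m"
        using False p assms(2) by (intro multiplicity_geI) auto
      moreover have "multiplicity p g \<le> 1"
        using assms(1) p squarefree_factorial_semiring''[OF g0] by blast
      ultimately show ?thesis by linarith
    qed (simp add: not_dvd_imp_multiplicity_0)
  qed
qed simp

lemma squarefree_mod_eq_if_prime_mod_eq:
  fixes g x y :: nat
  assumes "squarefree g" "\<And>p. prime p \<Longrightarrow> p dvd g \<Longrightarrow> x mod p = y mod p"
  shows "x mod g = y mod g"
proof -
  have "x mod g = y mod g"
    if "y \<le> x" "\<And>p. prime p \<Longrightarrow> p dvd g \<Longrightarrow> x mod p = y mod p" for x y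
    using that assms(1) squarefree_dvd_if_prime_divisors_dvd by (simp add: mod_eq_dvd_iff_nat)
  from this[of x y] this[of y x] assms(2) show ?thesis by (metis nat_le_linear)
qed

lemma squarefree_lcm:
  fixes a b :: nat
  assumes "squarefree a" "squarefree b"
  shows "squarefree (lcm a b)"
proof -
  have a0: "a \<noteq> 0" and b0: "b \<noteq> 0" using assms by (metis not_squarefree_0)+
  have "multiplicity p (lcm a b) \<le> 1" if "prime p" for p
    using that assms multiplicity_lcm[OF a0 b0 that] squarefree_factorial_semiring''[OF a0]
      squarefree_factorial_semiring''[OF b0] by simp
  moreover have "lcm a b \<noteq> 0" using a0 b0 by (simp add: lcm_eq_0_iff)
  ultimately show ?thesis using squarefree_factorial_semiring'' by blast
qed

lemma exists_multiple_with_residue: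
  fixes m r t :: nat
  assumes "coprime m r"
  shows "\<exists>w. m dvd w \<and> w mod r = t mod r"
proof (cases "m = 0")
  case True
  then show ?thesis using assms by auto
next
  case False
  then obtain s u where "m * s = r * u + 1"
    using bezout_nat[of m r] assms by (auto simp: coprime_iff_gcd_eq_1)
  then have "m * (s * t) = (r * u + 1) * t" by (simp flip: mult.assoc)
  also have "\<dots> = t + r * (u * t)" by (simp add: algebra_simps)
  finally show ?thesis by (metis dvd_triv_left mod_mult_self2)
qed

section \<open>Arithmetic progressions and the Kirch topology\<close>

lemma arith_prog_self [simp]: "x \<in> arith_prog x b"
  unfolding arith_prog_def by force

lemma mod_eq_if_in_arith_prog:
  assumes "y \<in> arith_prog x b" "q dvd b"
  shows "y mod q = x mod q"
proof -
  obtain n where "y = x + b * n" using assms(1) unfolding arith_prog_def by auto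
  moreover obtain c where "b = q * c" using assms(2) by blast
  ultimately show ?thesis by (simp add: mult.assoc)
qed

lemma coprime_if_in_arith_prog:
  assumes "y \<in> arith_prog x b" "coprime x b"
  shows "coprime y b"
proof -
  obtain n where y: "y = x + b * n" using assms(1) unfolding arith_prog_def by auto
  have "gcd b (x + b * n) = gcd b x" using gcd_add_mult[of b n x] by (simp add: ac_simps)
  then show ?thesis using assms(2) y by (simp add: coprime_iff_gcd_eq_1 gcd.commute)
qed

lemma arith_prog_subset:
  assumes "y \<in> arith_prog x b"
  shows "arith_prog y b \<subseteq> arith_prog x b"
proof
  fix z assume "z \<in> arith_prog y b"
  then obtain m where "z = y + b * m" unfolding arith_prog_def by auto
  moreover obtain n where "y = x + b * n" using assms unfolding arith_prog_def by auto
  ultimately have "z = x + b * (n + m)" by (simp add: algebra_simps)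
  then show "z \<in> arith_prog x b" unfolding arith_prog_def by blast
qed

lemma arith_prog_subset_if_dvd:
  assumes "c dvd d"
  shows "arith_prog x d \<subseteq> arith_prog x c"
proof
  fix y assume "y \<in> arith_prog x d"
  then obtain n where "y = x + d * n" unfolding arith_prog_def by auto
  moreover obtain k where "d = c * k" using assms by auto
  ultimately have "y = x + c * (k * n)" by simp
  then show "y \<in> arith_prog x c" unfolding arith_prog_def by blast
qed

lemma arith_prog_Int_nonempty:
  assumes "0 < b" "0 < d" "x mod gcd b d = w mod gcd b d"
  shows "arith_prog x b \<inter> arith_prog w d \<noteq> {}"
proof -
  have meet: "arith_prog x b \<inter> arith_prog w d \<noteq> {}"
    if le: "w \<le> x" and d: "0 < d" and g: "gcd d b dvd x - w" for x b w d :: nat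
  proof -
    obtain q where q: "x - w = gcd d b * q" using g by blast
    obtain s t where "d * s = b * t + gcd d b" using bezout_nat[of d b] d by auto
    then have "d * (s * q) = b * (t * q) + (x - w)" using q by (metis add_mult_distrib mult.assoc)
    then have "w + d * (s * q) = x + b * (t * q)" using le by simp
    then show ?thesis unfolding arith_prog_def by blast
  qed
  show ?thesis
  proof (cases "w \<le> x")
    case True
    then show ?thesis using meet assms by (simp add: mod_eq_dvd_iff_nat gcd.commute)
  next
    case False
    then have "gcd b d dvd w - x" using assms(3) mod_eq_dvd_iff_nat[of x w "gcd b d"] by simp
    then show ?thesis using meet[of x w b d] False assms(1) by auto
  qed
qed

lemma topspace_kirch_topology: "topspace kirch_topology = {0<..}"
proof -
  have "\<Union>kirch_base = {0<..}"
  proof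
    show "\<Union>kirch_base \<subseteq> {0<..}"
      unfolding kirch_base_def arith_prog_def by auto
    show "{0<..} \<subseteq> \<Union>kirch_base"
    proof
      fix n :: nat assume "n \<in> {0<..}"
      then have "arith_prog n 1 \<in> kirch_base" unfolding kirch_base_def by force
      then show "n \<in> \<Union>kirch_base" using arith_prog_self by blast
    qed
  qed
  then show ?thesis by (simp add: kirch_topology_def)
qed

lemma openin_kirch_arith_prog:
  assumes "0 < a" "0 < b" "coprime a b" "squarefree b"
  shows "openin kirch_topology (arith_prog a b)"
  unfolding kirch_topology_def
  by (rule topology_generated_by_Basis) (use assms in \<open>auto simp: kirch_base_def\<close>)

lemma kirch_open_contains_arith_prog:
  assumes "openin kirch_topology U" "x \<in> U"
  shows "\<exists>b>0. coprime x b \<and> squarefree b \<and> arith_prog x b \<subseteq> U"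
proof -
  have "generate_topology_on kirch_base U"
    using assms(1) unfolding kirch_topology_def by (rule openin_topology_generated_by)
  then show ?thesis using assms(2)
  proof (induction arbitrary: x)
    case (Int U1 U2)
    then obtain b1 b2 where
      b1: "b1 > 0" "coprime x b1" "squarefree b1" "arith_prog x b1 \<subseteq> U1" and
      b2: "b2 > 0" "coprime x b2" "squarefree b2" "arith_prog x b2 \<subseteq> U2" by blast
    have "coprime x (lcm b1 b2)"
      using b1(2) b2(2) coprime_divisors[of x x "lcm b1 b2" "b1 * b2"] lcm_least
      by (simp add: coprime_mult_right_iff)
    moreover have "arith_prog x (lcm b1 b2) \<subseteq> U1 \<inter> U2"
      using b1(4) b2(4) arith_prog_subset_if_dvd[of b1 "lcm b1 b2" x]
        arith_prog_subset_if_dvd[of b2 "lcm b1 b2" x] by auto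
    moreover have "squarefree (lcm b1 b2)" using b1(3) b2(3) by (rule squarefree_lcm)
    moreover have "0 < lcm b1 b2" using b1(1) b2(1) by (rule lcm_pos_nat)
    ultimately show ?case by blast
  next
    case (UN K)
    then obtain k where "k \<in> K" "x \<in> k" by blast
    then have "\<exists>b>0. coprime x b \<and> squarefree b \<and> arith_prog x b \<subseteq> k"
      using UN.IH by blast
    then show ?case using \<open>k \<in> K\<close> by blast
  next
    case (Basis A)
    then obtain a b where A: "A = arith_prog a b" "0 < b" "coprime a b" "squarefree b"
      by (auto simp: kirch_base_def)
    then have "coprime x b" "arith_prog x b \<subseteq> A"
      using Basis.prems coprime_if_in_arith_prog arith_prog_subset by simp_all
    then show ?case using A by blast
  qed simp
qed

lemma kirch_closure_of_pos:
  assumes "w \<in> kirch_topology closure_of S"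
  shows "0 < w"
  using closure_of_subset_topspace[of kirch_topology S] assms
  by (auto simp: topspace_kirch_topology)

lemma kirch_closure_of_arith_progD:
  assumes w: "w \<in> kirch_topology closure_of arith_prog x b" and q: "prime q" "q dvd b"
  shows "q dvd w \<or> w mod q = x mod q"
proof (cases "q dvd w")
  case False
  then have "openin kirch_topology (arith_prog w q)"
    using kirch_closure_of_pos[OF w] q(1) prime_gt_0_nat squarefree_prime
    by (intro openin_kirch_arith_prog) (simp_all add: coprime_commute prime_imp_coprime)
  then obtain y where "y \<in> arith_prog x b" "y \<in> arith_prog w q"
    using w arith_prog_self unfolding in_closure_of by blast
  then show ?thesis using mod_eq_if_in_arith_prog q(2) by (metis dvd_refl)
qed simp

lemma in_kirch_closure_of_arith_progI:
  assumes b: "0 < b" "squarefree b" and "0 < w"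
    and residues: "\<And>q. prime q \<Longrightarrow> q dvd b \<Longrightarrow> q dvd w \<or> w mod q = x mod q"
  shows "w \<in> kirch_topology closure_of arith_prog x b"
  unfolding in_closure_of
proof (intro conjI allI impI)
  show "w \<in> topspace kirch_topology" using \<open>0 < w\<close> topspace_kirch_topology by simp
  fix T assume "w \<in> T \<and> openin kirch_topology T"
  then obtain d where d: "0 < d" "coprime w d" "arith_prog w d \<subseteq> T"
    using kirch_open_contains_arith_prog by blast
  have "x mod gcd b d = w mod gcd b d"
  proof (rule squarefree_mod_eq_if_prime_mod_eq)
    show "squarefree (gcd b d)" using b(2) squarefree_mono gcd_dvd1 by blast
    fix p :: nat assume p: "prime p" "p dvd gcd b d"
    then have "p dvd b" "p dvd d" by auto
    then have "\<not> p dvd w" using prime_not_dvd_if_coprime[OF d(2) p(1)] by blast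
    then show "x mod p = w mod p" using residues[OF p(1) \<open>p dvd b\<close>] by simp
  qed
  then obtain y where "y \<in> arith_prog x b" "y \<in> arith_prog w d"
    using arith_prog_Int_nonempty[OF b(1) d(1)] by blast
  then show "\<exists>y. y \<in> arith_prog x b \<and> y \<in> T" using d(3) by blast
qed

section \<open>Closure adjacency\<close>

definition closure_adjacent :: "'a topology \<Rightarrow> 'a \<Rightarrow> 'a \<Rightarrow> bool" where
  "closure_adjacent X x y \<longleftrightarrow>
     (\<forall>W. openin X W \<longrightarrow> W \<noteq> {} \<longrightarrow>
        (\<exists>U V. openin X U \<and> openin X V \<and> x \<in> U \<and> y \<in> V \<and>
               X closure_of U \<inter> X closure_of V \<subseteq> X closure_of W))"

lemma closure_adjacent_homeomorphic_map:
  assumes h: "homeomorphic_map X Y h" and "x \<in> topspace X" "y \<in> topspace X"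
    and "closure_adjacent X x y"
  shows "closure_adjacent Y (h x) (h y)"
  unfolding closure_adjacent_def
proof (intro allI impI)
  fix W' assume W': "openin Y W'" "W' \<noteq> {}"
  define W where "W = {u \<in> topspace X. h u \<in> W'}"
  have "openin X W"
    unfolding W_def using homeomorphic_imp_continuous_map[OF h] W'(1)
    by (rule openin_continuous_map_preimage)
  moreover have "W \<noteq> {}"
  proof -
    obtain z' where "z' \<in> W'" using W'(2) by blast
    moreover have "W' \<subseteq> h ` topspace X"
      using openin_subset[OF W'(1)] homeomorphic_imp_surjective_map[OF h] by simp
    ultimately obtain z where "z \<in> topspace X" "h z \<in> W'" by blast
    then show ?thesis unfolding W_def by blast
  qed
  ultimately obtain U V where UV: "openin X U" "openin X V" "x \<in> U" "y \<in> V"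
      "X closure_of U \<inter> X closure_of V \<subseteq> X closure_of W"
    using assms(4) unfolding closure_adjacent_def by blast
  have sub: "U \<subseteq> topspace X" "V \<subseteq> topspace X" "W \<subseteq> topspace X"
    using openin_subset[OF UV(1)] openin_subset[OF UV(2)] unfolding W_def by auto
  have "Y closure_of (h ` U) \<inter> Y closure_of (h ` V) = h ` (X closure_of U \<inter> X closure_of V)"
    using homeomorphic_map_closure_of[OF h sub(1)] homeomorphic_map_closure_of[OF h sub(2)]
      inj_on_image_Int[OF homeomorphic_imp_injective_map[OF h]
        closure_of_subset_topspace closure_of_subset_topspace]
    by simp
  also have "\<dots> \<subseteq> h ` (X closure_of W)" using UV(5) by blast
  also have "\<dots> = Y closure_of (h ` W)" using homeomorphic_map_closure_of[OF h sub(3)] by simp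
  also have "\<dots> \<subseteq> Y closure_of W'" by (rule closure_of_mono) (auto simp: W_def)
  finally have "Y closure_of (h ` U) \<inter> Y closure_of (h ` V) \<subseteq> Y closure_of W'" .
  moreover have "openin Y (h ` U)" "openin Y (h ` V)"
    using homeomorphic_map_openness[OF h sub(1)] homeomorphic_map_openness[OF h sub(2)] UV(1,2)
    by simp_all
  ultimately show "\<exists>U V. openin Y U \<and> openin Y V \<and> h x \<in> U \<and> h y \<in> V \<and>
      Y closure_of U \<inter> Y closure_of V \<subseteq> Y closure_of W'"
    using UV(3,4) by (intro exI[of _ "h ` U"] exI[of _ "h ` V"]) simp
qed

lemma closure_adjacent_homeomorphic_map_iff:
  assumes h: "homeomorphic_map X Y h" and "x \<in> topspace X" "y \<in> topspace X"
  shows "closure_adjacent Y (h x) (h y) \<longleftrightarrow> closure_adjacent X x y"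
proof
  obtain g where "homeomorphic_maps X Y h g" using h homeomorphic_map_maps by blast
  then have g: "homeomorphic_map Y X g" "g (h x) = x" "g (h y) = y"
    using assms(2,3) unfolding homeomorphic_maps_map by blast+
  have "h x \<in> topspace Y" "h y \<in> topspace Y"
    using assms(2,3) homeomorphic_imp_surjective_map[OF h] by blast+
  moreover assume "closure_adjacent Y (h x) (h y)"
  ultimately have "closure_adjacent X (g (h x)) (g (h y))"
    by (rule closure_adjacent_homeomorphic_map[OF g(1)])
  then show "closure_adjacent X x y" using g(2,3) by simp
qed (rule closure_adjacent_homeomorphic_map[OF assms])

section \<open>Closure adjacency in the Kirch topology\<close>

definition odd_separated :: "nat \<Rightarrow> nat \<Rightarrow> bool" where
  "odd_separated x y \<longleftrightarrow>
     (\<forall>r. prime r \<longrightarrow> odd r \<longrightarrow> \<not> r dvd x \<and> \<not> r dvd y \<and> x mod r \<noteq> y mod r)"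

definition pow2_adjacent :: "nat \<Rightarrow> nat \<Rightarrow> bool" where
  "pow2_adjacent x y \<longleftrightarrow> (\<exists>k. {x, y} = {2 ^ k, 2 ^ Suc k})"

lemma odd_separated_commute: "odd_separated x y \<longleftrightarrow> odd_separated y x"
  unfolding odd_separated_def by (simp add: eq_commute conj_commute conj_left_commute)

lemma odd_separated_pow2_Suc: "odd_separated (2 ^ k) (2 ^ Suc k)"
  unfolding odd_separated_def
proof (intro allI impI conjI)
  fix r :: nat assume r: "prime r" "odd r"
  show "\<not> r dvd 2 ^ k" "\<not> r dvd 2 ^ Suc k"
    using r odd_prime_not_dvd_power_of_two by blast+
  have "2 ^ Suc k - 2 ^ k = (2 ^ k :: nat)" by simp
  then show "2 ^ k mod r \<noteq> 2 ^ Suc k mod r"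
    using r odd_prime_not_dvd_power_of_two mod_eq_dvd_iff_nat[of "2 ^ k" "2 ^ Suc k" r]
    by auto
qed

lemma odd_separated_pow2_imp_Suc:
  assumes "a < b" "odd_separated (2 ^ a) (2 ^ b)"
  shows "b = Suc a"
proof -
  define q :: nat where "q = 2 ^ (b - a) - 1"
  have "(2::nat) ^ b = 2 ^ a * 2 ^ (b - a)"
    using assms(1) by (simp flip: power_add)
  then have diff: "2 ^ b - 2 ^ a = 2 ^ a * q"
    unfolding q_def by (simp add: diff_mult_distrib2)
  have no_odd: "\<not> r dvd q" if "prime r" "odd r" for r
  proof
    assume "r dvd q"
    then have "r dvd 2 ^ b - 2 ^ a" unfolding diff by simp
    moreover have "(2::nat) ^ a \<le> 2 ^ b" using assms(1) by simp
    ultimately have "2 ^ b mod r = 2 ^ a mod r" by (simp add: mod_eq_dvd_iff_nat)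
    moreover have "2 ^ a mod r \<noteq> 2 ^ b mod r"
      using assms(2) that unfolding odd_separated_def by simp
    ultimately show False by simp
  qed
  have "1 < (2::nat) ^ (b - a)" using assms(1) by (intro one_less_power) auto
  then have "0 < q" unfolding q_def by simp
  then obtain j where j: "q = 2 ^ j" using power_of_two_if_no_odd_prime_divisor no_odd by blast
  have "odd q" using assms(1) unfolding q_def by simp
  then have "j = 0" using j by (cases j) auto
  then have "(2::nat) ^ (b - a) = 2 ^ 1" using j unfolding q_def by simp
  then show ?thesis using assms(1) power_inject_exp[of "2::nat" "b - a" 1] by simp
qed

lemma odd_separated_iff_pow2_adjacent: "odd_separated x y \<longleftrightarrow> pow2_adjacent x y"
proof
  assume sep: "odd_separated x y"
  have three: "\<not> 3 dvd x" "\<not> 3 dvd y" "x mod 3 \<noteq> y mod 3"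
    using sep[unfolded odd_separated_def, rule_format, of 3] by simp_all
  have "0 < x" "0 < y" using three(1,2) by (auto intro!: gr0I)
  moreover have "\<not> p dvd x" "\<not> p dvd y" if "prime p" "odd p" for p
    using sep that unfolding odd_separated_def by simp_all
  ultimately obtain a b where ab: "x = 2 ^ a" "y = 2 ^ b"
    using power_of_two_if_no_odd_prime_divisor by meson
  then have "a \<noteq> b" using three(3) by auto
  then consider "a < b" | "b < a" by linarith
  then have "b = Suc a \<or> a = Suc b"
  proof cases
    case 1
    then show ?thesis using odd_separated_pow2_imp_Suc[of a b] sep ab by simp
  next
    case 2
    then show ?thesis
      using odd_separated_pow2_imp_Suc[of b a] sep ab odd_separated_commute by simp
  qed
  then show "pow2_adjacent x y"
    unfolding pow2_adjacent_def ab
    by (elim disjE) (rule exI[of _ a], simp, rule exI[of _ b], simp add: insert_commute)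
next
  assume "pow2_adjacent x y"
  then obtain k where "{x, y} = {2 ^ k, 2 ^ Suc k}" unfolding pow2_adjacent_def ..
  then have "x = 2 ^ k \<and> y = 2 ^ Suc k \<or> x = 2 ^ Suc k \<and> y = 2 ^ k"
    by (simp add: doubleton_eq_iff)
  then show "odd_separated x y" using odd_separated_pow2_Suc[of k] odd_separated_commute by auto
qed

lemma kirch_closures_Int_subset_if_odd_separated:
  assumes sep: "odd_separated x y" and d: "0 < d" "squarefree d" "coprime z d"
    and e: "odd e" "\<And>q. prime q \<Longrightarrow> q dvd d \<Longrightarrow> q \<noteq> 2 \<Longrightarrow> q dvd e"
  shows "kirch_topology closure_of arith_prog x e \<inter> kirch_topology closure_of arith_prog y e
    \<subseteq> kirch_topology closure_of arith_prog z d"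
proof
  fix w assume w: "w \<in> kirch_topology closure_of arith_prog x e \<inter>
    kirch_topology closure_of arith_prog y e"
  then have "0 < w" using kirch_closure_of_pos by blast
  then show "w \<in> kirch_topology closure_of arith_prog z d"
  proof (rule in_kirch_closure_of_arith_progI[OF d(1,2)])
    fix q assume q: "prime q" "q dvd d"
    show "q dvd w \<or> w mod q = z mod q"
    proof (cases "q = 2")
      case True
      \<comment> \<open>z is odd, so the prime 2 constrains nothing; this is why 2 may be removed from d\<close>
      then have "odd z" using prime_not_dvd_if_coprime[OF d(3) q] by simp
      then show ?thesis using True by (auto simp: odd_iff_mod_2_eq_one elim: oddE)
    next
      case False
      then have "q dvd e" using e(2) q by blast
      then have "odd q" using e(1) dvd_trans by blast
      then have "x mod q \<noteq> y mod q" using sep q(1) unfolding odd_separated_def by blast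
      moreover have "q dvd w \<or> w mod q = x mod q" "q dvd w \<or> w mod q = y mod q"
        using kirch_closure_of_arith_progD[OF _ q(1) \<open>q dvd e\<close>] w by auto
      ultimately show ?thesis by auto
    qed
  qed
qed

lemma odd_separated_imp_closure_adjacent:
  assumes sep: "odd_separated x y"
  shows "closure_adjacent kirch_topology x y"
  unfolding closure_adjacent_def
proof (intro allI impI)
  fix W assume W: "openin kirch_topology W" "W \<noteq> {}"
  then obtain z where "z \<in> W" by blast
  then obtain d where d: "0 < d" "coprime z d" "squarefree d" "arith_prog z d \<subseteq> W"
    using kirch_open_contains_arith_prog W(1) by blast
  obtain k e where e: "d = 2 ^ k * e" "odd e"
      "\<And>q. prime q \<Longrightarrow> q dvd d \<Longrightarrow> q \<noteq> 2 \<Longrightarrow> q dvd e"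
    using prime_free_part[OF _ two_is_prime_nat] d(1) by blast
  have "e dvd d" using e(1) by simp
  then have e_pos: "0 < e" and e_sqf: "squarefree e"
    using d(1,3) squarefree_mono by (auto intro: dvd_pos_nat)
  have "coprime x e" "coprime y e"
    using sep e(2) dvd_trans unfolding odd_separated_def
    by (auto intro!: coprime_if_no_common_prime_divisor)
  moreover have "0 < x" "0 < y"
    using sep[unfolded odd_separated_def, rule_format, of 3] by (auto intro!: gr0I)
  ultimately have "openin kirch_topology (arith_prog x e)" "openin kirch_topology (arith_prog y e)"
    using e_pos e_sqf openin_kirch_arith_prog by auto
  moreover have "kirch_topology closure_of arith_prog x e \<inter>
      kirch_topology closure_of arith_prog y e \<subseteq> kirch_topology closure_of W"
    using kirch_closures_Int_subset_if_odd_separated[OF sep d(1,3,2) e(2,3)]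
      closure_of_mono[OF d(4)] by blast
  ultimately show "\<exists>U V. openin kirch_topology U \<and> openin kirch_topology V \<and>
      x \<in> U \<and> y \<in> V \<and>
      kirch_topology closure_of U \<inter> kirch_topology closure_of V \<subseteq> kirch_topology closure_of W"
    by (intro exI[of _ "arith_prog x e"] exI[of _ "arith_prog y e"]) simp
qed

lemma common_nonzero_residue:
  fixes r x y :: nat
  assumes "1 < r" "r dvd x \<or> r dvd y \<or> x mod r = y mod r"
  obtains t where "0 < t" "t < r"
    "\<not> r dvd x \<Longrightarrow> x mod r = t" "\<not> r dvd y \<Longrightarrow> y mod r = t"
proof -
  define t where "t = (if \<not> r dvd x then x mod r else if \<not> r dvd y then y mod r else 1)"
  have "0 < t \<and> t < r \<and>
      (\<not> r dvd x \<longrightarrow> x mod r = t) \<and> (\<not> r dvd y \<longrightarrow> y mod r = t)"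
    using assms unfolding t_def by (auto simp: dvd_eq_mod_eq_0)
  then show ?thesis using that by blast
qed

lemma kirch_closures_common_point:
  assumes r: "prime r" and "0 < t" "t < r"
    and b: "0 < b" "squarefree b" "r dvd b \<Longrightarrow> x mod r = t"
    and c: "0 < c" "squarefree c" "r dvd c \<Longrightarrow> y mod r = t"
  obtains w where "w mod r = t" "w \<in> kirch_topology closure_of arith_prog x b"
    "w \<in> kirch_topology closure_of arith_prog y c"
proof -
  have "b * c \<noteq> 0" using b(1) c(1) by simp
  then obtain k M where M: "b * c = r ^ k * M" "\<not> r dvd M"
      "\<And>q. prime q \<Longrightarrow> q dvd b * c \<Longrightarrow> q \<noteq> r \<Longrightarrow> q dvd M"
    using prime_free_part[OF _ r] by blast
  have "coprime M r" using M(2) r prime_imp_coprime coprime_commute by blast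
  then obtain w where w: "M dvd w" "w mod r = t"
    using exists_multiple_with_residue[of M r t] \<open>t < r\<close> by auto
  then have "0 < w" using \<open>0 < t\<close> by (intro gr0I) auto
  have dvd_w: "q dvd w" if "prime q" "q dvd b * c" "q \<noteq> r" for q
    using M(3)[OF that] w(1) dvd_trans by blast
  have "w \<in> kirch_topology closure_of arith_prog x b"
  proof (rule in_kirch_closure_of_arith_progI[OF b(1,2) \<open>0 < w\<close>])
    fix q assume q: "prime q" "q dvd b"
    show "q dvd w \<or> w mod q = x mod q"
    proof (cases "q = r")
      case False
      then show ?thesis using dvd_w[OF q(1) dvd_mult2[OF q(2)]] by simp
    qed (use q b(3) w(2) in simp)
  qed
  moreover have "w \<in> kirch_topology closure_of arith_prog y c"
  proof (rule in_kirch_closure_of_arith_progI[OF c(1,2) \<open>0 < w\<close>])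
    fix q assume q: "prime q" "q dvd c"
    show "q dvd w \<or> w mod q = y mod q"
    proof (cases "q = r")
      case False
      then show ?thesis using dvd_w[OF q(1) dvd_mult[OF q(2)]] by simp
    qed (use q c(3) w(2) in simp)
  qed
  ultimately show ?thesis using that w(2) by blast
qed

lemma closure_adjacent_imp_odd_separated:
  assumes adj: "closure_adjacent kirch_topology x y"
  shows "odd_separated x y"
  unfolding odd_separated_def
proof (intro allI impI)
  fix r :: nat assume r: "prime r" "odd r"
  show "\<not> r dvd x \<and> \<not> r dvd y \<and> x mod r \<noteq> y mod r"
  proof (rule ccontr)
    assume "\<not> (\<not> r dvd x \<and> \<not> r dvd y \<and> x mod r \<noteq> y mod r)"
    moreover have "r \<noteq> 2" using r(2) by auto
    then have "2 < r" using prime_ge_2_nat[OF r(1)] by linarith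
    ultimately obtain t where t: "0 < t" "t < r"
        "\<not> r dvd x \<Longrightarrow> x mod r = t" "\<not> r dvd y \<Longrightarrow> y mod r = t"
      using common_nonzero_residue[of r x y] by auto
    \<comment> \<open>W = z + rN misses the residue t, which closures of neighbourhoods of x and y share\<close>
    define z :: nat where "z = (if t = 1 then 2 else 1)"
    have z: "0 < z" "z < r" "z \<noteq> t" using \<open>2 < r\<close> unfolding z_def by auto
    have "\<not> r dvd z" using z(1,2) by (auto dest: dvd_imp_le)
    then have "coprime z r" using r(1) prime_imp_coprime coprime_commute by blast
    then have "openin kirch_topology (arith_prog z r)"
      using openin_kirch_arith_prog z(1) r(1) prime_gt_0_nat squarefree_prime by blast
    moreover have "arith_prog z r \<noteq> {}" using arith_prog_self by blast
    ultimately obtain U V where UV: "openin kirch_topology U" "openin kirch_topology V"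
        "x \<in> U" "y \<in> V" "kirch_topology closure_of U \<inter> kirch_topology closure_of V
           \<subseteq> kirch_topology closure_of arith_prog z r"
      using adj[unfolded closure_adjacent_def, rule_format] by blast
    obtain b where b: "0 < b" "coprime x b" "squarefree b" "arith_prog x b \<subseteq> U"
      using kirch_open_contains_arith_prog UV(1,3) by blast
    obtain c where c: "0 < c" "coprime y c" "squarefree c" "arith_prog y c \<subseteq> V"
      using kirch_open_contains_arith_prog UV(2,4) by blast
    have "r dvd b \<Longrightarrow> x mod r = t" "r dvd c \<Longrightarrow> y mod r = t"
      using t(3,4) prime_not_dvd_if_coprime b(2) c(2) r(1) by blast+
    then obtain w where w: "w mod r = t" "w \<in> kirch_topology closure_of arith_prog x b"
        "w \<in> kirch_topology closure_of arith_prog y c"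
      using kirch_closures_common_point[OF r(1) t(1,2) b(1,3) _ c(1,3)] by blast
    then have "w \<in> kirch_topology closure_of arith_prog z r"
      using UV(5) closure_of_mono[OF b(4)] closure_of_mono[OF c(4)] by blast
    then have "r dvd w \<or> w mod r = z mod r"
      using kirch_closure_of_arith_progD r(1) dvd_refl by blast
    then show False using w(1) t(1,2) z(2,3) by (auto simp: dvd_eq_mod_eq_0)
  qed
qed

lemma closure_adjacent_kirch_iff_pow2_adjacent:
  "closure_adjacent kirch_topology x y \<longleftrightarrow> pow2_adjacent x y"
  using odd_separated_imp_closure_adjacent closure_adjacent_imp_odd_separated
    odd_separated_iff_pow2_adjacent by blast

section \<open>Automorphisms of the path of powers of two\<close>

lemma pow2_adjacent_1_iff: "pow2_adjacent 1 y \<longleftrightarrow> y = 2"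
proof
  assume "pow2_adjacent 1 y"
  then obtain k where "{1, y} = {2 ^ k, 2 ^ Suc k}" unfolding pow2_adjacent_def ..
  then show "y = 2" by (auto simp: doubleton_eq_iff)
next
  assume "y = 2"
  then show "pow2_adjacent 1 y" unfolding pow2_adjacent_def by (intro exI[of _ 0]) simp
qed

lemma pow2_adjacent_pow2_Suc_iff:
  "pow2_adjacent (2 ^ Suc k) y \<longleftrightarrow> y = 2 ^ k \<or> y = 2 ^ Suc (Suc k)"
proof
  assume "pow2_adjacent (2 ^ Suc k) y"
  then obtain j where "{2 ^ Suc k, y} = {2 ^ j, 2 ^ Suc j}" unfolding pow2_adjacent_def ..
  then have "(2::nat) ^ Suc k = 2 ^ j \<and> y = 2 ^ Suc j \<or>
      (2::nat) ^ Suc k = 2 ^ Suc j \<and> y = 2 ^ j"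
    by (simp add: doubleton_eq_iff)
  then show "y = 2 ^ k \<or> y = 2 ^ Suc (Suc k)" by auto
next
  assume "y = 2 ^ k \<or> y = 2 ^ Suc (Suc k)"
  then show "pow2_adjacent (2 ^ Suc k) y"
    unfolding pow2_adjacent_def
    by (elim disjE) (rule exI[of _ k], simp add: insert_commute, rule exI[of _ "Suc k"], simp)
qed

lemma pow2_adjacent_imp_pow2: "pow2_adjacent x y \<Longrightarrow> \<exists>k. x = 2 ^ k"
  unfolding pow2_adjacent_def doubleton_eq_iff by blast

lemma pow2_adjacent_automorphism_fixes_pow2:
  fixes h :: "nat \<Rightarrow> nat"
  assumes bij: "bij_betw h {0<..} {0<..}"
    and adj: "\<And>x y. 0 < x \<Longrightarrow> 0 < y \<Longrightarrow>
      pow2_adjacent (h x) (h y) \<longleftrightarrow> pow2_adjacent x y"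
  shows "h (2 ^ n) = 2 ^ n"
proof -
  have inj: "x = y" if "h x = h y" "0 < x" "0 < y" for x y
    using inj_onD[OF bij_betw_imp_inj_on[OF bij] that(1)] that(2,3) by simp
  have neighbour_of_h1: "y = h 2" if "0 < y" "pow2_adjacent (h 1) y" for y
  proof -
    have "y \<in> h ` {0<..}" using bij_betw_imp_surj_on[OF bij] that(1) by simp
    then obtain u where u: "0 < u" "y = h u" by auto
    then have "pow2_adjacent 1 u" using adj[of 1 u] that(2) by simp
    then show ?thesis using u pow2_adjacent_1_iff by simp
  qed
  have h1: "h 1 = 1"
  proof -
    have "pow2_adjacent (h 1) (h 2)" using adj[of 1 2] pow2_adjacent_1_iff by simp
    then obtain k where k: "h 1 = 2 ^ k" using pow2_adjacent_imp_pow2 by blast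
    show ?thesis
    proof (cases k)
      case (Suc j)
      then have "2 ^ j = h 2" "2 ^ Suc (Suc j) = h 2"
        using neighbour_of_h1 k pow2_adjacent_pow2_Suc_iff by auto
      then show ?thesis by simp
    qed (use k in simp)
  qed
  have "h (2 ^ m) = 2 ^ m \<and> h (2 ^ Suc m) = 2 ^ Suc m" for m
  proof (induction m)
    case 0
    have "pow2_adjacent 1 (h 2)" using adj[of 1 2] h1 pow2_adjacent_1_iff by simp
    then show ?case using h1 pow2_adjacent_1_iff by simp
  next
    case (Suc m)
    then have "pow2_adjacent (2 ^ Suc m) (h (2 ^ Suc (Suc m)))"
      using adj[of "2 ^ Suc m" "2 ^ Suc (Suc m)"] pow2_adjacent_pow2_Suc_iff by simp
    then have "h (2 ^ Suc (Suc m)) = 2 ^ m \<or> h (2 ^ Suc (Suc m)) = 2 ^ Suc (Suc m)"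
      using pow2_adjacent_pow2_Suc_iff by simp
    moreover have "h (2 ^ Suc (Suc m)) \<noteq> h (2 ^ m)"
      using inj[of "2 ^ Suc (Suc m)" "2 ^ m"] by fastforce
    ultimately show ?case using Suc by simp
  qed
  then show ?thesis by blast
qed

theorem lemma3p9:
  fixes h :: "nat \<Rightarrow> nat" and n :: nat
  assumes "homeomorphic_map kirch_topology kirch_topology h"
  shows "h (2 ^ n) = 2 ^ n"
proof (rule pow2_adjacent_automorphism_fixes_pow2)
  show "bij_betw h {0<..} {0<..}"
    using homeomorphic_imp_injective_map[OF assms] homeomorphic_imp_surjective_map[OF assms]
    unfolding bij_betw_def topspace_kirch_topology by blast
  fix x y :: nat assume "0 < x" "0 < y"
  then show "pow2_adjacent (h x) (h y) \<longleftrightarrow> pow2_adjacent x y"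
    using closure_adjacent_homeomorphic_map_iff[OF assms] topspace_kirch_topology
    by (simp flip: closure_adjacent_kirch_iff_pow2_adjacent)
qed

end
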